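(* Let $l>0$, $h=ld^{-1/2}$, and let $(X_t,Y_t)$ be a pair of RWM chains targeting $\mathcal{N}_d(0,I_d)$ under any Markovian coupling. Conditional on $\frac1d(\lVert X_t\rVert^2,\lVert Y_t\rVert^2,X_t^\top Y_t)=(x,y,v)$, $$\lim_{d\to\infty}\mathbb{E}\big[hY_t^\top Z_xB_x\big]=-vl^2e^{l^2(x-1)/2}\Phi\big(l/(2x^{1/2})-lx^{1/2}\big),\qquad \lim_{d\to\infty}\mathbb{E}\big[hX_t^\top Z_yB_y\big]=-vl^2e^{l^2(y-1)/2}\Phi\big(l/(2y^{1/2})-ly^{1/2}\big).$$ Moreover, both convergences are uniform over $(x,y,v)\in\mathcal{S}(X,Y)$, for every fixed $X,Y>0$.
   Context: RWM updates: $X_{t+1}=X_t+hZ_xB_x$, $Y_{t+1}=Y_t+hZ_yB_y$ with $B_x=\mathbb{1}\{U_x\le\exp(-hX_t^\top Z_x-h^2\lVert Z_x\rVert^2/2)\}$, $B_y=\mathbb{1}\{U_y\le\exp(-hY_t^\top Z_y-h^2\lVert Z_y\rVert^2/2)\}$, where $Z_x\sim\mathcal{N}_d(0,I_d)$ and $U_x\sim\mathrm{Unif}(0,1)$ are independent (similarly $Z_y,U_y$). $\Phi$ is the standard normal cdf. $\mathcal{S}(X,Y)=\{(x,y,v):x\in[0,X],y\in[0,Y],|v|\le\sqrt{xy}\}$. *)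

theory Defs
  imports "HOL-Probability.Probability"
begin

text \<open>Vectors of R^d are represented as functions nat => real, only the
coordinates i < d being relevant.\<close>

definition innerd :: "nat \<Rightarrow> (nat \<Rightarrow> real) \<Rightarrow> (nat \<Rightarrow> real) \<Rightarrow> real" where
  "innerd d a b = (\<Sum>i<d. a i * b i)"

definition std_normal :: "real measure" where
  "std_normal = density lborel std_normal_density"

definition Phi :: "real \<Rightarrow> real" where
  "Phi t = measure std_normal {..t}"

definition gauss :: "nat \<Rightarrow> (nat \<Rightarrow> real) measure" where
  "gauss d = PiM {..<d} (\<lambda>_. std_normal)"

definition unif01 :: "real measure" where
  "unif01 = uniform_measure lborel {0<..<1}"

text \<open>The proposal noise (Z, U) of one RWM chain: Z ~ N_d(0,I_d) independent of U ~ Unif(0,1).\<close>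
definition noise :: "nat \<Rightarrow> ((nat \<Rightarrow> real) \<times> real) measure" where
  "noise d = gauss d \<Otimes>\<^sub>M unif01"

text \<open>A (Markovian) coupling at the current state: any probability law of
((Z_x,U_x),(Z_y,U_y)) whose two marginals are the noise laws.\<close>
definition coupling :: "nat \<Rightarrow> (((nat \<Rightarrow> real) \<times> real) \<times> ((nat \<Rightarrow> real) \<times> real)) measure \<Rightarrow> bool" where
  "coupling d K \<longleftrightarrow> prob_space K \<and> sets K = sets (noise d \<Otimes>\<^sub>M noise d)
     \<and> distr K (noise d) fst = noise d \<and> distr K (noise d) snd = noise d"

definition accept :: "nat \<Rightarrow> real \<Rightarrow> (nat \<Rightarrow> real) \<Rightarrow> (nat \<Rightarrow> real) \<times> real \<Rightarrow> real" where
  "accept d h a zu = (if snd zu \<le> exp (- h * innerd d a (fst zu) - h\<^sup>2 * innerd d (fst zu) (fst zu) / 2)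
                      then 1 else 0)"

definition Sset :: "real \<Rightarrow> real \<Rightarrow> (real \<times> real \<times> real) set" where
  "Sset X Y = {(x, y, v). x \<in> {0..X} \<and> y \<in> {0..Y} \<and> \<bar>v\<bar> \<le> sqrt (x * y)}"

definition limfun :: "real \<Rightarrow> real \<Rightarrow> real \<Rightarrow> real" where
  "limfun l x v = - v * l\<^sup>2 * exp (l\<^sup>2 * (x - 1) / 2) * Phi (l / (2 * sqrt x) - l * sqrt x)"

end

(*
  Integrating out U turns the acceptance indicator into the acceptance probability
  min 1 (exp (- D)), where D = h a.Z + h^2 |Z|^2 / 2 is the energy increment of the proposal.
  Gaussian integration by parts in each coordinate of Z (D is quadratic in it, and
  min 1 (exp (- t)) is Lipschitz with derivative -exp (- t) on t > 0 and 0 on t < 0) gives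

    E[b.Z min 1 (exp (- D))] = - h a.b E[exp (- D); D >= 0] - h^2 E[b.Z exp (- D); D >= 0].

  For h = l / sqrt d, the first term is - l^2 v E[exp (- D); D >= 0], and the second is
  O(1/d) because E|b.Z| <= |b| = sqrt (d y). Finally D differs from the Gaussian variable
  h a.Z + l^2/2 ~ N(l^2/2, l^2 x) by l^2 (|Z|^2 - d) / (2 d), of second moment l^4 / (2 d);
  as t |-> exp (- t) [t >= 0] is 1-Lipschitz away from its jump at 0 and a nondegenerate
  Gaussian rarely falls near 0, E[exp (- D); D >= 0] tends to
  E[exp (- W); W >= 0] = exp (l^2 (x - 1) / 2) Phi (l / (2 sqrt x) - l sqrt x).
  All error bounds depend on (x, y, v) only through |v| <= sqrt (X Y) and y <= Y, whence
  uniformity. Each expectation involves only one marginal of the coupling.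
*)

theory Submission
  imports Defs "HOL-Real_Asymp.Real_Asymp" "HOL-Library.Quadratic_Discriminant"
begin

section \<open>The standard normal law\<close>

lemma prob_space_std_normal: "prob_space std_normal"
  unfolding std_normal_def by (rule prob_space_normal_density) simp

lemma sets_std_normal [simp, measurable_cong]: "sets std_normal = sets borel"
  unfolding std_normal_def by simp

lemma integral_std_normal:
  "f \<in> borel_measurable borel \<Longrightarrow>
    (\<integral>w. f w \<partial>std_normal) = (\<integral>w. std_normal_density w * f w \<partial>lborel)"
  unfolding std_normal_def by (subst integral_density) auto

lemma integrable_std_normal_iff:
  "f \<in> borel_measurable borel \<Longrightarrow>
    integrable std_normal f \<longleftrightarrow> integrable lborel (\<lambda>w. std_normal_density w * f w)"
  unfolding std_normal_def by (subst integrable_density) auto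

lemma std_normal_density_le_half: "std_normal_density w \<le> 1 / 2"
proof -
  have "(2::real) \<le> sqrt (2 * pi)"
    using real_sqrt_le_mono[of 4 "2 * pi"] pi_gt3 by (simp add: real_sqrt_eq_iff)
  then have "1 / sqrt (2 * pi) \<le> 1 / 2"
    by (intro divide_left_mono) auto
  then have "1 / sqrt (2 * pi) * exp (- w\<^sup>2 / 2) \<le> 1 / 2 * 1"
    by (intro mult_mono) auto
  then show ?thesis
    unfolding std_normal_density_def by simp
qed

lemma integral_std_normal_abs: "(\<integral>w. \<bar>w\<bar> \<partial>std_normal) = sqrt (2 / pi)"
  using integral_std_normal_moment_abs_odd[of 0] by (subst integral_std_normal) auto

lemma integrable_std_normal_linear_growth:
  assumes [measurable]: "f \<in> borel_measurable borel" and bound: "\<And>w. \<bar>f w\<bar> \<le> c + e * \<bar>w\<bar>"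
  shows "integrable std_normal f"
proof (rule Bochner_Integration.integrable_bound)
  interpret prob_space std_normal by (rule prob_space_std_normal)
  have "integrable std_normal (\<lambda>w. \<bar>w\<bar>)"
    using integrable_std_normal_moment_abs[of 1] by (subst integrable_std_normal_iff) auto
  then show "integrable std_normal (\<lambda>w. c + e * \<bar>w\<bar>)"
    by auto
  show "AE w in std_normal. norm (f w) \<le> norm (c + e * \<bar>w\<bar>)"
    using bound by (auto intro: order_trans[OF _ abs_ge_self])
qed measurable

lemma std_normal_moments:
  "(\<integral>w. w\<^sup>2 \<partial>std_normal) = 1" "integrable std_normal (\<lambda>w. w\<^sup>2)"
  "(\<integral>w. w ^ 4 \<partial>std_normal) = 3" "integrable std_normal (\<lambda>w. w ^ 4)"
proof -
  show "(\<integral>w. w\<^sup>2 \<partial>std_normal) = 1"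
    using integral_std_normal_moment_even[of 1] by (subst integral_std_normal) auto
  show "(\<integral>w. w ^ 4 \<partial>std_normal) = 3"
    using integral_std_normal_moment_even[of 2]
    by (subst integral_std_normal) (auto simp: fact_numeral)
  show "integrable std_normal (\<lambda>w. w\<^sup>2)" "integrable std_normal (\<lambda>w. w ^ 4)"
    using integrable_std_normal_moment[of 2] integrable_std_normal_moment[of 4]
    by (subst integrable_std_normal_iff; simp)+
qed

lemma integral_lborel_derivative_eq_0:
  fixes F H :: "real \<Rightarrow> real"
  assumes S: "finite S" and cont: "continuous_on UNIV F"
    and deriv: "\<And>x. x \<notin> S \<Longrightarrow> (F has_real_derivative H x) (at x)"
    and H: "integrable lborel H"
    and top: "(F \<longlongrightarrow> 0) at_top" and bot: "(F \<longlongrightarrow> 0) at_bot"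
  shows "(\<integral>x. H x \<partial>lborel) = 0"
proof -
  have [measurable]: "H \<in> borel_measurable borel"
    using H by auto
  have FTC: "(\<integral>x. indicator {- real n .. real n} x * H x \<partial>lborel) = F (real n) - F (- real n)"
    for n :: nat
  proof (rule has_integral_unique)
    have "integrable lborel (\<lambda>x. indicator {- real n .. real n} x * H x)"
      using integrable_real_mult_indicator[OF _ H] by (simp add: mult.commute)
    from has_integral_integral_lborel[OF this]
    show "(H has_integral (\<integral>x. indicator {- real n .. real n} x * H x \<partial>lborel)) {- real n .. real n}"
      unfolding indicator_times_eq_if(1) has_integral_restrict_UNIV .
    show "(H has_integral F (real n) - F (- real n)) {- real n .. real n}"
      using S deriv by (intro fundamental_theorem_of_calculus_interior_strong continuous_on_subset[OF cont])
        (auto simp: has_real_derivative_iff_has_vector_derivative)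
  qed
  have "(\<lambda>n. \<integral>x. indicator {- real n .. real n} x * H x \<partial>lborel) \<longlonglongrightarrow> (\<integral>x. H x \<partial>lborel)"
  proof (rule integral_dominated_convergence[where w="\<lambda>x. \<bar>H x\<bar>"])
    show "AE x in lborel. (\<lambda>n. indicator {- real n .. real n} x * H x) \<longlonglongrightarrow> H x"
    proof (rule AE_I2)
      fix x :: real
      obtain N :: nat where "\<bar>x\<bar> \<le> real N"
        using real_nat_ceiling_ge by blast
      then have "\<forall>n\<ge>N. indicator {- real n .. real n} x * H x = H x"
        by (auto simp: indicator_def)
      then show "(\<lambda>n. indicator {- real n .. real n} x * H x) \<longlonglongrightarrow> H x"
        by (intro tendsto_eventually) (auto simp: eventually_sequentially)
    qed
  qed (use H in \<open>auto simp: indicator_def\<close>)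
  moreover have "(\<lambda>n. F (real n) - F (- real n)) \<longlonglongrightarrow> 0 - 0"
    using filterlim_compose[OF top filterlim_real_sequentially]
      filterlim_compose[OF bot filterlim_compose[OF filterlim_uminus_at_bot_at_top filterlim_real_sequentially]]
    by (intro tendsto_diff) (simp_all add: o_def)
  ultimately show ?thesis
    unfolding FTC by (simp add: LIMSEQ_unique)
qed

lemma std_normal_integration_by_parts:
  fixes g g' :: "real \<Rightarrow> real"
  assumes S: "finite S" and cont: "continuous_on UNIV g"
    and deriv: "\<And>w. w \<notin> S \<Longrightarrow> (g has_real_derivative g' w) (at w)"
    and g_bound: "\<And>w. \<bar>g w\<bar> \<le> B"
    and [measurable]: "g' \<in> borel_measurable borel"
    and g'_bound: "\<And>w. \<bar>g' w\<bar> \<le> c + e * \<bar>w\<bar>"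
  shows "(\<integral>w. w * g w \<partial>std_normal) = (\<integral>w. g' w \<partial>std_normal)"
proof -
  let ?\<psi> = std_normal_density
  have [measurable]: "g \<in> borel_measurable borel"
    using cont by (rule borel_measurable_continuous_onI)
  have "integrable std_normal g'"
    by (rule integrable_std_normal_linear_growth[OF _ g'_bound]) simp
  then have int1: "integrable lborel (\<lambda>w. ?\<psi> w * g' w)"
    by (simp add: integrable_std_normal_iff)
  have "\<bar>w * g w\<bar> \<le> 0 + B * \<bar>w\<bar>" for w
    using mult_left_mono[OF g_bound abs_ge_zero, of w w] by (simp add: abs_mult mult.commute)
  then have "integrable std_normal (\<lambda>w. w * g w)"
    by (rule integrable_std_normal_linear_growth[rotated]) simp
  then have int2: "integrable lborel (\<lambda>w. ?\<psi> w * (w * g w))"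
    by (simp add: integrable_std_normal_iff)
  have d\<psi>: "(?\<psi> has_real_derivative - w * ?\<psi> w) (at w)" for w
  proof -
    have "((\<lambda>w. exp (- w\<^sup>2 / 2)) has_real_derivative - w * exp (- w\<^sup>2 / 2)) (at w)"
      by (auto intro!: derivative_eq_intros)
    from DERIV_cmult[OF this, of "1 / sqrt (2 * pi)"] show ?thesis
      unfolding std_normal_density_def by (simp add: mult_ac)
  qed
  have "(\<integral>w. ?\<psi> w * g' w - ?\<psi> w * (w * g w) \<partial>lborel) = 0"
  proof (rule integral_lborel_derivative_eq_0[OF S, where F="\<lambda>w. ?\<psi> w * g w"])
    show "continuous_on UNIV (\<lambda>w. ?\<psi> w * g w)"
      unfolding std_normal_density_def by (intro continuous_intros cont) auto
    show "((\<lambda>w. ?\<psi> w * g w) has_real_derivative ?\<psi> w * g' w - ?\<psi> w * (w * g w)) (at w)"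
      if "w \<notin> S" for w
      using DERIV_mult[OF d\<psi> deriv[OF that]] by (simp add: algebra_simps)
    show "integrable lborel (\<lambda>w. ?\<psi> w * g' w - ?\<psi> w * (w * g w))"
      using int1 int2 by simp
    have "\<bar>?\<psi> w * g w\<bar> \<le> B * ?\<psi> w" for w
      using g_bound[of w] by (simp add: abs_mult mult.commute mult_right_mono)
    then have vanish: "((\<lambda>w. ?\<psi> w * g w) \<longlongrightarrow> 0) F" if "(?\<psi> \<longlongrightarrow> 0) F" for F
      by (intro Lim_null_comparison[OF always_eventually tendsto_mult_right_zero[OF that, of B]]) simp
    have "(?\<psi> \<longlongrightarrow> 0) at_top" "(?\<psi> \<longlongrightarrow> 0) at_bot"
      unfolding std_normal_density_def by real_asymp+
    then show "((\<lambda>w. ?\<psi> w * g w) \<longlongrightarrow> 0) at_top" "((\<lambda>w. ?\<psi> w * g w) \<longlongrightarrow> 0) at_bot"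
      by (simp_all add: vanish)
  qed
  then show ?thesis
    using int1 int2 by (simp add: integral_std_normal)
qed

section \<open>The Metropolis acceptance probability\<close>

text \<open>\<open>acc_prob t\<close> is the Metropolis acceptance probability of a proposal that raises the
  energy by \<open>t\<close>; off \<open>t = 0\<close> its derivative is \<open>- acc_slope t\<close>.\<close>

definition acc_prob :: "real \<Rightarrow> real" where
  "acc_prob t = min 1 (exp (- t))"

definition acc_slope :: "real \<Rightarrow> real" where
  "acc_slope t = (if 0 \<le> t then exp (- t) else 0)"

lemma borel_measurable_acc_prob [measurable]: "acc_prob \<in> borel_measurable borel"
  unfolding acc_prob_def by measurable

lemma borel_measurable_acc_slope [measurable]: "acc_slope \<in> borel_measurable borel"
  unfolding acc_slope_def by measurable

lemma acc_prob_bounds: "0 \<le> acc_prob t" "acc_prob t \<le> 1"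
  unfolding acc_prob_def by auto

lemma acc_slope_bounds: "0 \<le> acc_slope t" "acc_slope t \<le> 1"
  unfolding acc_slope_def by auto

lemma continuous_on_acc_prob: "continuous_on A acc_prob"
  unfolding acc_prob_def by (intro continuous_intros)

lemma has_real_derivative_acc_prob:
  assumes "t \<noteq> 0"
  shows "(acc_prob has_real_derivative - acc_slope t) (at t)"
proof (cases "t > 0")
  case True
  have "((\<lambda>s. exp (- s)) has_real_derivative - acc_slope t) (at t)"
    using True by (auto intro!: derivative_eq_intros simp: acc_slope_def)
  then show ?thesis
    by (rule has_field_derivative_transform_within_open[where S="{0<..}"])
      (use True in \<open>auto simp: acc_prob_def\<close>)
next
  case False
  with assms have "t < 0"
    by simp
  have "((\<lambda>s. 1) has_real_derivative - acc_slope t) (at t)"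
    using \<open>t < 0\<close> by (simp add: acc_slope_def)
  then show ?thesis
    by (rule has_field_derivative_transform_within_open[where S="{..<0}"])
      (use \<open>t < 0\<close> in \<open>auto simp: acc_prob_def\<close>)
qed

lemma std_normal_stein_acc_prob_quadratic:
  fixes \<alpha> \<beta> \<gamma> :: real
  assumes \<beta>: "\<beta> > 0"
  shows "(\<integral>w. w * acc_prob (\<alpha> * w + \<beta> / 2 * w\<^sup>2 + \<gamma>) \<partial>std_normal)
       = (\<integral>w. - (\<alpha> + \<beta> * w) * acc_slope (\<alpha> * w + \<beta> / 2 * w\<^sup>2 + \<gamma>) \<partial>std_normal)"
proof -
  define q where "q w = \<alpha> * w + \<beta> / 2 * w\<^sup>2 + \<gamma>" for w
  have "(\<integral>w. w * acc_prob (q w) \<partial>std_normal) = (\<integral>w. - (\<alpha> + \<beta> * w) * acc_slope (q w) \<partial>std_normal)"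
  proof (rule std_normal_integration_by_parts[where B=1 and c="\<bar>\<alpha>\<bar>" and e=\<beta>])
    let ?r = "sqrt (discrim (\<beta> / 2) \<alpha> \<gamma>)"
    have "{w. q w = 0} \<subseteq> {(- \<alpha> + ?r) / (2 * (\<beta> / 2)), (- \<alpha> - ?r) / (2 * (\<beta> / 2))}"
      using discriminant_iff[of "\<beta> / 2" _ \<alpha> \<gamma>] \<beta> by (auto simp: q_def algebra_simps)
    then show "finite {w. q w = 0}"
      by (rule finite_subset) simp
    show "((\<lambda>w. acc_prob (q w)) has_real_derivative - (\<alpha> + \<beta> * w) * acc_slope (q w)) (at w)"
      if "w \<notin> {w. q w = 0}" for w
    proof -
      have dq: "(q has_real_derivative \<alpha> + \<beta> * w) (at w)"
        unfolding q_def by (auto intro!: derivative_eq_intros)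
      have "q w \<noteq> 0"
        using that by simp
      from DERIV_chain2[OF has_real_derivative_acc_prob[OF this] dq] show ?thesis
        by (simp add: algebra_simps)
    qed
    show "\<bar>- (\<alpha> + \<beta> * w) * acc_slope (q w)\<bar> \<le> \<bar>\<alpha>\<bar> + \<beta> * \<bar>w\<bar>" for w
    proof -
      have "\<bar>- (\<alpha> + \<beta> * w) * acc_slope (q w)\<bar> = \<bar>\<alpha> + \<beta> * w\<bar> * acc_slope (q w)"
        by (simp only: abs_mult abs_minus_cancel abs_of_nonneg[OF acc_slope_bounds(1)])
      also have "\<dots> \<le> \<bar>\<alpha> + \<beta> * w\<bar>"
        using acc_slope_bounds(2) by (rule mult_left_le) simp
      also have "\<dots> \<le> \<bar>\<alpha>\<bar> + \<beta> * \<bar>w\<bar>"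
        using \<beta> abs_triangle_ineq[of \<alpha> "\<beta> * w"] by (simp add: abs_mult)
      finally show ?thesis .
    qed
    show "continuous_on UNIV (\<lambda>w. acc_prob (q w))"
      unfolding q_def by (intro continuous_on_compose2[OF continuous_on_acc_prob] continuous_intros) auto
  qed (auto simp: acc_prob_bounds abs_le_iff q_def)
  then show ?thesis
    by (simp add: q_def)
qed

text \<open>Completing the square: \<open>\<psi>(w) exp (- (c w + k)) = exp (c\<^sup>2/2 - k) \<psi>(w + c)\<close>.\<close>

lemma integral_std_normal_acc_slope_affine:
  assumes c: "c > 0"
  shows "(\<integral>w. acc_slope (c * w + k) \<partial>std_normal) = exp (c\<^sup>2 / 2 - k) * Phi (k / c - c)"
proof -
  let ?E = "exp (c\<^sup>2 / 2 - k)" and ?\<psi> = std_normal_density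
  have shift: "?\<psi> w * exp (- (c * w + k)) = ?E * ?\<psi> (w + c)" for w
  proof -
    have "exp (- w\<^sup>2 / 2) * exp (- (c * w + k)) = ?E * exp (- (w + c)\<^sup>2 / 2)"
      unfolding exp_add[symmetric] by (simp add: power2_eq_square field_simps)
    then show ?thesis
      unfolding std_normal_density_def normal_density_def by simp
  qed
  have "?\<psi> w * acc_slope (c * w + k) = ?E * (?\<psi> (w + c) * indicator {w. 0 \<le> c * w + k} w)" for w
    using shift[of w] by (simp add: acc_slope_def indicator_def)
  then have "(\<integral>w. acc_slope (c * w + k) \<partial>std_normal)
      = (\<integral>w. ?E * (?\<psi> (w + c) * indicator {w. 0 \<le> c * w + k} w) \<partial>lborel)"
    by (subst integral_std_normal) simp_all
  also have "\<dots> = (\<integral>x. ?E * (?\<psi> (- c - x) * indicator {..k / c - c} (- c - x)) \<partial>lborel)"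
  proof (intro Bochner_Integration.integral_cong refl)
    fix x
    have "- c - x \<le> k / c - c \<longleftrightarrow> 0 \<le> c * x + k"
      using c by (simp add: field_simps)
    moreover have "(- c - x)\<^sup>2 = (x + c)\<^sup>2"
      by (simp add: power2_eq_square algebra_simps)
    ultimately show "?E * (?\<psi> (x + c) * indicator {w. 0 \<le> c * w + k} x)
        = ?E * (?\<psi> (- c - x) * indicator {..k / c - c} (- c - x))"
      by (simp add: indicator_def std_normal_density_def)
  qed
  also have "\<dots> = (\<integral>u. ?E * (?\<psi> u * indicator {..k / c - c} u) \<partial>lborel)"
    using lborel_integral_real_affine[where c="-1" and t="- c"
        and f="\<lambda>u. ?E * (?\<psi> u * indicator {..k / c - c} u)"]
    by simp
  also have "\<dots> = ?E * Phi (k / c - c)"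
    by (simp add: Phi_def integral_std_normal[symmetric])
  finally show ?thesis .
qed

lemma abs_exp_neg_diff_le:
  fixes p q :: real
  assumes "0 \<le> p" "0 \<le> q"
  shows "\<bar>exp (- p) - exp (- q)\<bar> \<le> \<bar>p - q\<bar>"
proof -
  have "exp (- p) - exp (- q) \<le> q - p" if "0 \<le> p" "p \<le> q" for p q :: real
  proof -
    have "exp (- p) - exp (- q) = exp (- p) * (1 - exp (- (q - p)))"
      by (simp add: algebra_simps exp_diff exp_minus field_simps)
    also have "\<dots> \<le> 1 * (q - p)"
    proof (rule mult_mono)
      show "1 - exp (- (q - p)) \<le> q - p"
        using exp_ge_add_one_self[of "- (q - p)"] by linarith
    qed (use that in auto)
    finally show ?thesis
      by simp
  qed
  from this[of p q] this[of q p] assms show ?thesis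
    by (cases "p \<le> q") auto
qed

text \<open>\<open>acc_slope\<close> is \<open>1\<close>-Lipschitz except across its jump at \<open>0\<close>; a jump is either
  witnessed by \<open>p\<^sub>0\<close> being \<open>\<delta>\<close>-close to \<open>0\<close> or by \<open>p\<close> being \<open>\<delta>\<close>-far from \<open>p\<^sub>0\<close>.\<close>

lemma abs_acc_slope_diff_le:
  fixes p p\<^sub>0 \<delta> :: real
  assumes \<delta>: "\<delta> > 0"
  shows "\<bar>acc_slope p - acc_slope p\<^sub>0\<bar> \<le> \<delta> + indicator {t. \<bar>t\<bar> \<le> \<delta>} p\<^sub>0 + (p - p\<^sub>0)\<^sup>2 / \<delta>\<^sup>2"
proof -
  have le1: "\<bar>acc_slope p - acc_slope p\<^sub>0\<bar> \<le> 1"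
    using acc_slope_bounds[of p] acc_slope_bounds[of p\<^sub>0] by linarith
  have nonneg: "0 \<le> (indicator {t. \<bar>t\<bar> \<le> \<delta>} p\<^sub>0 :: real)" "0 \<le> (p - p\<^sub>0)\<^sup>2 / \<delta>\<^sup>2"
    by auto
  consider "\<bar>p - p\<^sub>0\<bar> > \<delta>" | "\<bar>p\<^sub>0\<bar> \<le> \<delta>" | "\<bar>p - p\<^sub>0\<bar> \<le> \<delta>" "p\<^sub>0 > \<delta>" | "\<bar>p - p\<^sub>0\<bar> \<le> \<delta>" "p\<^sub>0 < - \<delta>"
    by linarith
  then show ?thesis
  proof cases
    case 1
    then have "\<delta>\<^sup>2 < (p - p\<^sub>0)\<^sup>2"
      using \<delta> power_strict_mono[of \<delta> "\<bar>p - p\<^sub>0\<bar>" 2] by simp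
    then have "1 < (p - p\<^sub>0)\<^sup>2 / \<delta>\<^sup>2"
      using \<delta> by simp
    then show ?thesis
      using le1 nonneg \<delta> by linarith
  next
    case 2
    then have "(indicator {t. \<bar>t\<bar> \<le> \<delta>} p\<^sub>0 :: real) = 1"
      by (simp add: indicator_def)
    then show ?thesis
      using le1 nonneg \<delta> by linarith
  next
    case 3
    then have "0 \<le> p" "0 \<le> p\<^sub>0"
      by auto
    then have "\<bar>acc_slope p - acc_slope p\<^sub>0\<bar> \<le> \<bar>p - p\<^sub>0\<bar>"
      using abs_exp_neg_diff_le[of p p\<^sub>0] by (simp add: acc_slope_def)
    then show ?thesis
      using 3 nonneg by linarith
  next
    case 4
    then have "p < 0" "p\<^sub>0 < 0"
      by auto
    then show ?thesis
      using nonneg \<delta> by (simp add: acc_slope_def)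
  qed
qed

lemma integral_std_normal_affine_near_0_le:
  assumes c: "c > 0" and \<delta>: "\<delta> > 0"
  shows "(\<integral>w. indicator {t. \<bar>t\<bar> \<le> \<delta>} (c * w + k) \<partial>std_normal) \<le> \<delta> / c"
proof -
  define A where "A = {(- k - \<delta>) / c .. (- k + \<delta>) / c}"
  have "indicator {t. \<bar>t\<bar> \<le> \<delta>} (c * w + k) = (indicator A w :: real)" for w
    using c by (auto simp: A_def indicator_def field_simps abs_le_iff)
  then have "(\<integral>w. indicator {t. \<bar>t\<bar> \<le> \<delta>} (c * w + k) \<partial>std_normal)
      = (\<integral>w. std_normal_density w * indicator A w \<partial>lborel)"
    by (subst integral_std_normal) (simp_all add: A_def)
  also have "\<dots> \<le> (\<integral>w. 1 / 2 * indicator A w \<partial>lborel)"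
  proof (rule integral_mono)
    have iA: "integrable lborel (indicator A :: real \<Rightarrow> real)"
      unfolding A_def by (simp add: integrable_indicator_iff emeasure_lborel_Icc_eq)
    then show "integrable lborel (\<lambda>w. 1 / 2 * indicator A w :: real)"
      by simp
    show "integrable lborel (\<lambda>w. std_normal_density w * indicator A w)"
      by (rule Bochner_Integration.integrable_bound[OF iA])
        (auto simp: indicator_def A_def intro!: AE_I2 order_trans[OF std_normal_density_le_half])
    show "std_normal_density w * indicator A w \<le> 1 / 2 * indicator A w" for w
      using std_normal_density_le_half[of w] by (simp add: indicator_def)
  qed
  also have "\<dots> = \<delta> / c"
    using c \<delta> by (simp add: A_def field_simps)
  finally show ?thesis .
qed

section \<open>Standard Gaussian vectors\<close>

lemma prob_space_gauss: "prob_space (gauss d)"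
  unfolding gauss_def by (intro prob_space_PiM prob_space_std_normal)

lemma measurable_gauss_component:
  "i < d \<Longrightarrow> (\<lambda>z. z i) \<in> measurable (gauss d) std_normal"
  unfolding gauss_def by (intro measurable_component_singleton) auto

lemma borel_measurable_gauss_component:
  "i < d \<Longrightarrow> (\<lambda>z. z i) \<in> borel_measurable (gauss d)"
  using measurable_gauss_component[of i d] unfolding measurable_cong_sets[OF refl sets_std_normal] .

lemma borel_measurable_innerd_gauss [measurable]:
  "(\<lambda>z. innerd d a z) \<in> borel_measurable (gauss d)"
  "(\<lambda>z. innerd d z z) \<in> borel_measurable (gauss d)"
  unfolding innerd_def
  by (intro borel_measurable_sum borel_measurable_times borel_measurable_const
      borel_measurable_gauss_component; simp)+

lemma distr_gauss_component:
  "i < d \<Longrightarrow> distr (gauss d) std_normal (\<lambda>z. z i) = std_normal"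
  unfolding gauss_def by (intro distr_PiM_component prob_space_std_normal) auto

lemma integral_gauss_component:
  fixes f :: "real \<Rightarrow> real"
  assumes "i < d" and [measurable]: "f \<in> borel_measurable borel"
  shows "(\<integral>z. f (z i) \<partial>gauss d) = (\<integral>w. f w \<partial>std_normal)"
    and "integrable (gauss d) (\<lambda>z. f (z i)) \<longleftrightarrow> integrable std_normal f"
  using integral_distr[OF measurable_gauss_component[OF assms(1)], of f]
    integrable_distr_eq[OF measurable_gauss_component[OF assms(1)], of f]
  by (simp_all add: distr_gauss_component[OF assms(1)])

lemma integrable_gauss_linear_growth:
  fixes g :: "(nat \<Rightarrow> real) \<Rightarrow> real"
  assumes "i < d" and [measurable]: "g \<in> borel_measurable (gauss d)"
    and bound: "\<And>z. \<bar>g z\<bar> \<le> c + e * \<bar>z i\<bar>"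
  shows "integrable (gauss d) g"
proof -
  note [measurable] = borel_measurable_gauss_component[OF assms(1)]
  have "\<bar>c + e * \<bar>w\<bar>\<bar> \<le> \<bar>c\<bar> + \<bar>e\<bar> * \<bar>w\<bar>" for w
    using abs_triangle_ineq[of c "e * \<bar>w\<bar>"] by (simp add: abs_mult)
  then have "integrable std_normal (\<lambda>w. c + e * \<bar>w\<bar>)"
    by (rule integrable_std_normal_linear_growth[rotated]) simp
  then have "integrable (gauss d) (\<lambda>z. c + e * \<bar>z i\<bar>)"
    using integral_gauss_component(2)[OF assms(1), of "\<lambda>w. c + e * \<bar>w\<bar>"] by simp
  then show ?thesis
    by (rule Bochner_Integration.integrable_bound)
      (use bound in \<open>auto intro: order_trans[OF _ abs_ge_self]\<close>)
qed

lemma integral_gauss_split_component: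
  fixes f :: "(nat \<Rightarrow> real) \<Rightarrow> real"
  assumes i: "i < d" and f: "integrable (gauss d) f"
  shows "integral\<^sup>L (gauss d) f =
    (\<integral>z. (\<integral>w. f (z(i := w)) \<partial>std_normal) \<partial>PiM ({..<d} - {i}) (\<lambda>_. std_normal))"
proof -
  define I where "I = {..<d} - {i}"
  have ins: "insert i I = {..<d}"
    using i by (auto simp: I_def)
  interpret P: prob_space "PiM I (\<lambda>_. std_normal)"
    by (intro prob_space_PiM prob_space_std_normal)
  interpret N: prob_space std_normal
    by (rule prob_space_std_normal)
  interpret pair_sigma_finite std_normal "PiM I (\<lambda>_. std_normal)" ..
  let ?upd = "\<lambda>(w, z). z(i := w)"
  have eq: "gauss d = distr (std_normal \<Otimes>\<^sub>M PiM I (\<lambda>_. std_normal)) (gauss d) ?upd"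
    unfolding gauss_def ins[symmetric]
    by (rule distr_pair_PiM_eq_PiM[symmetric]) (auto intro: prob_space_std_normal)
  have "(\<lambda>p. (snd p)(i := fst p)) \<in> measurable (std_normal \<Otimes>\<^sub>M PiM I (\<lambda>_. std_normal)) (gauss d)"
    unfolding gauss_def by (rule measurable_fun_upd[where J=I]) (use ins in auto)
  then have m: "?upd \<in> measurable (std_normal \<Otimes>\<^sub>M PiM I (\<lambda>_. std_normal)) (gauss d)"
    by (simp add: case_prod_beta')
  have fm: "f \<in> borel_measurable (gauss d)"
    using f by auto
  have "integrable (std_normal \<Otimes>\<^sub>M PiM I (\<lambda>_. std_normal)) (\<lambda>p. f (?upd p))"
    using f by (subst (asm) eq) (simp add: integrable_distr_eq[OF m fm])
  then show ?thesis
    using integral_distr[OF m fm] integral_snd[of "\<lambda>w z. f (z(i := w))"]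
    by (subst eq) (simp add: I_def case_prod_beta')
qed

lemma indep_vars_gauss_components:
  "prob_space.indep_vars (gauss d) (\<lambda>_. borel) (\<lambda>i z. z i) {..<d}"
proof (cases "d = 0")
  case True
  then show ?thesis
    by (simp add: prob_space.indep_vars_def prob_space_gauss prob_space.indep_sets_def)
next
  case False
  interpret prob_space "gauss d"
    by (rule prob_space_gauss)
  have "distr (gauss d) borel (\<lambda>z. z i) = std_normal" if "i < d" for i
    using distr_gauss_component[OF that] by (simp cong: distr_cong)
  then have "(\<Pi>\<^sub>M i\<in>{..<d}. distr (gauss d) borel (\<lambda>z. z i)) = gauss d"
    unfolding gauss_def by (intro PiM_cong) auto
  moreover have "distr (gauss d) (\<Pi>\<^sub>M i\<in>{..<d}. borel) (\<lambda>z. \<lambda>i\<in>{..<d}. z i)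
      = distr (gauss d) (gauss d) (\<lambda>z. z)"
    by (rule distr_cong) (auto simp: gauss_def space_PiM intro!: sets_PiM_cong)
  ultimately show ?thesis
    using False
    by (subst indep_vars_iff_distr_eq_PiM') (auto simp: distr_id borel_measurable_gauss_component)
qed

lemma distributed_gauss_innerd:
  assumes pos: "innerd d a a > 0"
  shows "distributed (gauss d) lborel (\<lambda>z. innerd d a z / sqrt (innerd d a a)) std_normal_density"
proof -
  interpret prob_space "gauss d"
    by (rule prob_space_gauss)
  define J where "J = {i. i < d \<and> a i \<noteq> 0}"
  have J: "finite J" "J \<subseteq> {..<d}"
    by (auto simp: J_def)
  have sq: "innerd d a a = (\<Sum>i\<in>J. (a i)\<^sup>2)"
    unfolding innerd_def J_def power2_eq_square by (rule sum.mono_neutral_right) auto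
  then have "J \<noteq> {}"
    using pos by auto
  have "indep_vars (\<lambda>_. borel) (\<lambda>i z. a i * z i) J"
    using indep_vars_subset[OF indep_vars_gauss_components J(2)] by (rule indep_vars_compose2) auto
  moreover have "distributed (gauss d) lborel (\<lambda>z. a i * z i) (normal_density 0 \<bar>a i\<bar>)"
    if "i \<in> J" for i
  proof -
    have "distributed (gauss d) lborel (\<lambda>z. z i) (normal_density 0 1)"
      using that distr_gauss_component[of i d] measurable_gauss_component[of i d]
      by (auto simp: J_def distributed_def std_normal_def cong: distr_cong)
    then have "distributed (gauss d) lborel (\<lambda>z. 0 + a i * z i) (normal_density (0 + a i * 0) (\<bar>a i\<bar> * 1))"
      using that by (intro normal_density_affine) (auto simp: J_def)
    then show ?thesis
      by simp
  qed
  ultimately have "distributed (gauss d) lborel (\<lambda>z. \<Sum>i\<in>J. a i * z i)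
      (normal_density (\<Sum>i\<in>J. 0) (sqrt (\<Sum>i\<in>J. \<bar>a i\<bar>\<^sup>2)))"
    using J \<open>J \<noteq> {}\<close> by (intro sum_indep_normal) (auto simp: J_def)
  moreover have "(\<lambda>z. \<Sum>i\<in>J. a i * z i) = (\<lambda>z. innerd d a z)"
    unfolding innerd_def J_def by (intro ext sum.mono_neutral_left) auto
  ultimately show ?thesis
    using normal_standard_normal_convert[of "sqrt (innerd d a a)" "\<lambda>z. innerd d a z" 0] pos sq
    by simp
qed

lemma integral_gauss_innerd:
  fixes g :: "real \<Rightarrow> real"
  assumes pos: "innerd d a a > 0" and [measurable]: "g \<in> borel_measurable borel"
  shows "(\<integral>z. g (innerd d a z) \<partial>gauss d) = (\<integral>w. g (sqrt (innerd d a a) * w) \<partial>std_normal)"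
proof -
  let ?s = "sqrt (innerd d a a)"
  have "(\<integral>w. g (?s * w) \<partial>std_normal) = (\<integral>z. g (?s * (innerd d a z / ?s)) \<partial>gauss d)"
    by (simp add: integral_std_normal distributed_integral[OF distributed_gauss_innerd[OF pos]])
  then show ?thesis
    using pos by simp
qed

lemma integrable_innerd_gauss: "integrable (gauss d) (\<lambda>z. innerd d b z)"
  unfolding innerd_def
  by (intro Bochner_Integration.integrable_sum integrable_mult_right)
    (rule integrable_gauss_linear_growth[where c=0 and e=1]; auto simp: borel_measurable_gauss_component)

lemma integral_abs_innerd_gauss_le: "(\<integral>z. \<bar>innerd d b z\<bar> \<partial>gauss d) \<le> sqrt (innerd d b b)"
proof -
  have nonneg: "0 \<le> innerd d b b"
    unfolding innerd_def by (intro sum_nonneg) auto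
  show ?thesis
  proof (cases "innerd d b b = 0")
    case True
    then have "b i = 0" if "i < d" for i
      using that sum_nonneg_eq_0_iff[of "{..<d}" "\<lambda>i. b i * b i"] by (auto simp: innerd_def)
    then show ?thesis
      by (simp add: innerd_def)
  next
    case False
    then have pos: "innerd d b b > 0"
      using nonneg by simp
    have "(\<integral>z. \<bar>innerd d b z\<bar> \<partial>gauss d) = sqrt (innerd d b b) * sqrt (2 / pi)"
      using integral_gauss_innerd[OF pos, of abs] integral_std_normal_abs pos by (simp add: abs_mult)
    also have "\<dots> \<le> sqrt (innerd d b b) * 1"
      using pi_gt3 nonneg by (intro mult_left_mono) auto
    finally show ?thesis
      by simp
  qed
qed

lemma gauss_norm_sq_variance:
  "integrable (gauss d) (\<lambda>z. (innerd d z z - real d)\<^sup>2)"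
  "(\<integral>z. (innerd d z z - real d)\<^sup>2 \<partial>gauss d) = 2 * real d"
proof -
  interpret prob_space "gauss d"
    by (rule prob_space_gauss)
  define Y where "Y i z = (z i)\<^sup>2 - 1" for i :: nat and z :: "nat \<Rightarrow> real"
  have moment2: "integrable (gauss d) (\<lambda>z. (z i)\<^sup>2)" "(\<integral>z. (z i)\<^sup>2 \<partial>gauss d) = 1" if "i < d" for i
    using integral_gauss_component[OF that, of "\<lambda>w. w\<^sup>2"] by (simp_all add: std_normal_moments)
  have Y_integral: "integrable (gauss d) (\<lambda>z. Y i z)" "(\<integral>z. Y i z \<partial>gauss d) = 0" if "i < d" for i
    using moment2[OF that] by (simp_all add: Y_def prob_space)
  have YY: "integrable (gauss d) (\<lambda>z. Y i z * Y j z) \<and> (\<integral>z. Y i z * Y j z \<partial>gauss d) = (if i = j then 2 else 0)"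
    if "i < d" "j < d" for i j
  proof (cases "i = j")
    case True
    have "Y i z * Y j z = (z i) ^ 4 - 2 * (z i)\<^sup>2 + 1" for z
      unfolding Y_def True by (simp add: power2_eq_square power4_eq_xxxx algebra_simps)
    then show ?thesis
      using True integral_gauss_component[OF that(1), of "\<lambda>w. w ^ 4"]
        integral_gauss_component[OF that(1), of "\<lambda>w. w\<^sup>2"]
      by (simp add: std_normal_moments prob_space)
  next
    case False
    have "indep_vars (\<lambda>_. borel) (\<lambda>k z. z k) {i, j}"
      using indep_vars_subset[OF indep_vars_gauss_components] that by auto
    then have ind: "indep_vars (\<lambda>_. borel) Y {i, j}"
      unfolding Y_def by (rule indep_vars_compose2) auto
    have "integrable (gauss d) (\<lambda>z. \<Prod>k\<in>{i, j}. Y k z)"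
      "(\<integral>z. (\<Prod>k\<in>{i, j}. Y k z) \<partial>gauss d) = (\<Prod>k\<in>{i, j}. \<integral>z. Y k z \<partial>gauss d)"
      using ind Y_integral that by (intro indep_vars_integrable indep_vars_lebesgue_integral; auto)+
    then show ?thesis
      using False Y_integral that by simp
  qed
  have "innerd d z z - real d = (\<Sum>i<d. Y i z)" for z
    by (simp add: innerd_def Y_def sum_subtractf power2_eq_square)
  then have sq: "(innerd d z z - real d)\<^sup>2 = (\<Sum>i<d. \<Sum>j<d. Y i z * Y j z)" for z
    by (simp add: power2_eq_square sum_product)
  show "integrable (gauss d) (\<lambda>z. (innerd d z z - real d)\<^sup>2)"
    unfolding sq using YY by (intro Bochner_Integration.integrable_sum) auto
  have "(\<integral>z. (innerd d z z - real d)\<^sup>2 \<partial>gauss d) = (\<Sum>i<d. \<Sum>j<d. \<integral>z. Y i z * Y j z \<partial>gauss d)"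
    unfolding sq using YY
    by (subst Bochner_Integration.integral_sum)
      (auto intro!: sum.cong Bochner_Integration.integral_sum Bochner_Integration.integrable_sum)
  also have "\<dots> = 2 * real d"
    using YY by (simp add: sum.If_cases)
  finally show "(\<integral>z. (innerd d z z - real d)\<^sup>2 \<partial>gauss d) = 2 * real d" .
qed

section \<open>Integration by parts for the acceptance probability\<close>

text \<open>For the target \<open>N\<^sub>d(0, I\<^sub>d)\<close>, \<open>energy_incr d h a z = |a + h z|\<^sup>2/2 - |a|\<^sup>2/2\<close>, and
  \<open>accept d h a (z, u) = 1\<close> iff \<open>u \<le> exp (- energy_incr d h a z)\<close>.\<close>

definition energy_incr :: "nat \<Rightarrow> real \<Rightarrow> (nat \<Rightarrow> real) \<Rightarrow> (nat \<Rightarrow> real) \<Rightarrow> real" where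
  "energy_incr d h a z = h * innerd d a z + h\<^sup>2 * innerd d z z / 2"

lemma borel_measurable_energy_incr [measurable]:
  "(\<lambda>z. energy_incr d h a z) \<in> borel_measurable (gauss d)"
  unfolding energy_incr_def by measurable

lemma innerd_comm: "innerd d a b = innerd d b a"
  unfolding innerd_def by (simp add: mult.commute)

lemma innerd_remove:
  "i < d \<Longrightarrow> innerd d a b = a i * b i + (\<Sum>j\<in>{..<d} - {i}. a j * b j)"
  unfolding innerd_def by (subst sum.remove[of _ i]) auto

lemma energy_incr_fun_upd:
  assumes "i < d"
  shows "\<exists>c. \<forall>w. energy_incr d h a (z(i := w)) = h * a i * w + h\<^sup>2 / 2 * w\<^sup>2 + c"
proof -
  define A where "A = (\<Sum>j\<in>{..<d} - {i}. a j * z j)"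
  define B where "B = (\<Sum>j\<in>{..<d} - {i}. z j * z j)"
  have "(\<Sum>j\<in>{..<d} - {i}. a j * (z(i := w)) j) = A" "(\<Sum>j\<in>{..<d} - {i}. (z(i := w)) j * (z(i := w)) j) = B"
    for w
    unfolding A_def B_def by (auto intro!: sum.cong)
  then have "energy_incr d h a (z(i := w)) = h * a i * w + h\<^sup>2 / 2 * w\<^sup>2 + (h * A + h\<^sup>2 * B / 2)" for w
    unfolding energy_incr_def innerd_remove[OF assms] by (simp add: power2_eq_square algebra_simps)
  then show ?thesis
    by blast
qed

lemma integrable_gauss_acc:
  assumes "i < d"
  shows "integrable (gauss d) (\<lambda>z. z i * acc_prob (energy_incr d h a z))"
    and "integrable (gauss d) (\<lambda>z. z i * acc_slope (energy_incr d h a z))"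
    and "integrable (gauss d) (\<lambda>z. acc_slope (energy_incr d h a z))"
proof -
  note [measurable] = borel_measurable_gauss_component[OF assms]
  let ?E = "energy_incr d h a"
  have bound: "\<bar>z i * acc_prob (?E z)\<bar> \<le> 1 + 1 * \<bar>z i\<bar>" "\<bar>z i * acc_slope (?E z)\<bar> \<le> 1 + 1 * \<bar>z i\<bar>"
    "\<bar>acc_slope (?E z)\<bar> \<le> 1 + 1 * \<bar>z i\<bar>" for z :: "nat \<Rightarrow> real"
    using mult_left_le[of "acc_prob (?E z)" "\<bar>z i\<bar>"] mult_left_le[of "acc_slope (?E z)" "\<bar>z i\<bar>"]
      acc_prob_bounds[of "?E z"] acc_slope_bounds[of "?E z"]
    by (simp_all add: abs_mult)
  show "integrable (gauss d) (\<lambda>z. z i * acc_prob (?E z))"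
    by (rule integrable_gauss_linear_growth[OF assms]) (measurable, rule bound)
  show "integrable (gauss d) (\<lambda>z. z i * acc_slope (?E z))"
    by (rule integrable_gauss_linear_growth[OF assms]) (measurable, rule bound)
  show "integrable (gauss d) (\<lambda>z. acc_slope (?E z))"
    by (rule integrable_gauss_linear_growth[OF assms]) (measurable, rule bound)
qed

lemma integral_gauss_component_acc_prob:
  assumes i: "i < d" and h: "h > 0"
  shows "(\<integral>z. z i * acc_prob (energy_incr d h a z) \<partial>gauss d)
    = - h * a i * (\<integral>z. acc_slope (energy_incr d h a z) \<partial>gauss d)
      - h\<^sup>2 * (\<integral>z. z i * acc_slope (energy_incr d h a z) \<partial>gauss d)"
proof -
  let ?E = "energy_incr d h a" and ?rest = "PiM ({..<d} - {i}) (\<lambda>_. std_normal)"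
  have inner: "(\<integral>w. (z(i := w)) i * acc_prob (?E (z(i := w))) \<partial>std_normal)
      = (\<integral>w. - h * a i * acc_slope (?E (z(i := w)))
          - h\<^sup>2 * ((z(i := w)) i * acc_slope (?E (z(i := w)))) \<partial>std_normal)" for z
  proof -
    obtain c where c: "\<And>w. ?E (z(i := w)) = h * a i * w + h\<^sup>2 / 2 * w\<^sup>2 + c"
      using energy_incr_fun_upd[OF i] by blast
    have "(\<integral>w. (z(i := w)) i * acc_prob (?E (z(i := w))) \<partial>std_normal)
        = (\<integral>w. w * acc_prob (h * a i * w + h\<^sup>2 / 2 * w\<^sup>2 + c) \<partial>std_normal)"
      by (simp add: c)
    also have "\<dots> = (\<integral>w. - (h * a i + h\<^sup>2 * w) * acc_slope (h * a i * w + h\<^sup>2 / 2 * w\<^sup>2 + c) \<partial>std_normal)"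
      using h by (intro std_normal_stein_acc_prob_quadratic) simp
    also have "\<dots> = (\<integral>w. - h * a i * acc_slope (?E (z(i := w)))
        - h\<^sup>2 * ((z(i := w)) i * acc_slope (?E (z(i := w)))) \<partial>std_normal)"
      by (intro Bochner_Integration.integral_cong) (simp_all add: c algebra_simps)
    finally show ?thesis .
  qed
  have "(\<integral>z. z i * acc_prob (?E z) \<partial>gauss d)
      = (\<integral>z. (\<integral>w. (z(i := w)) i * acc_prob (?E (z(i := w))) \<partial>std_normal) \<partial>?rest)"
    by (rule integral_gauss_split_component[OF i integrable_gauss_acc(1)[OF i]])
  also have "\<dots> = (\<integral>z. (\<integral>w. - h * a i * acc_slope (?E (z(i := w)))
      - h\<^sup>2 * ((z(i := w)) i * acc_slope (?E (z(i := w)))) \<partial>std_normal) \<partial>?rest)"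
    by (simp only: inner)
  also have "\<dots> = (\<integral>z. - h * a i * acc_slope (?E z) - h\<^sup>2 * (z i * acc_slope (?E z)) \<partial>gauss d)"
    using integrable_gauss_acc[OF i] by (intro integral_gauss_split_component[OF i, symmetric]) auto
  finally show ?thesis
    using integrable_gauss_acc[OF i] by simp
qed

lemma integral_gauss_innerd_mult:
  assumes "\<And>i. i < d \<Longrightarrow> integrable (gauss d) (\<lambda>z. z i * f z)"
  shows "(\<integral>z. innerd d b z * f z \<partial>gauss d) = (\<Sum>i<d. b i * (\<integral>z. z i * f z \<partial>gauss d))"
proof -
  have "innerd d b z * f z = (\<Sum>i<d. b i * (z i * f z))" for z
    by (simp add: innerd_def sum_distrib_right mult.assoc)
  then show ?thesis
    using assms by (simp add: Bochner_Integration.integral_sum)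
qed

lemma integral_gauss_innerd_acc_prob:
  assumes h: "h > 0"
  shows "(\<integral>z. innerd d b z * acc_prob (energy_incr d h a z) \<partial>gauss d)
     = - h * innerd d a b * (\<integral>z. acc_slope (energy_incr d h a z) \<partial>gauss d)
       - h\<^sup>2 * (\<integral>z. innerd d b z * acc_slope (energy_incr d h a z) \<partial>gauss d)"
proof -
  let ?S = "\<lambda>z. acc_slope (energy_incr d h a z)"
  have "(\<integral>z. innerd d b z * acc_prob (energy_incr d h a z) \<partial>gauss d)
      = (\<Sum>i<d. b i * (\<integral>z. z i * acc_prob (energy_incr d h a z) \<partial>gauss d))"
    by (rule integral_gauss_innerd_mult) (rule integrable_gauss_acc(1))
  also have "\<dots> = (\<Sum>i<d. - h * (a i * b i) * (\<integral>z. ?S z \<partial>gauss d) - h\<^sup>2 * (b i * (\<integral>z. z i * ?S z \<partial>gauss d)))"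
    by (intro sum.cong refl) (simp add: integral_gauss_component_acc_prob[OF _ h] algebra_simps)
  also have "\<dots> = - h * innerd d a b * (\<integral>z. ?S z \<partial>gauss d)
      - h\<^sup>2 * (\<Sum>i<d. b i * (\<integral>z. z i * ?S z \<partial>gauss d))"
    by (simp add: innerd_def sum_subtractf sum_distrib_left sum_distrib_right)
  also have "(\<Sum>i<d. b i * (\<integral>z. z i * ?S z \<partial>gauss d)) = (\<integral>z. innerd d b z * ?S z \<partial>gauss d)"
    by (rule integral_gauss_innerd_mult[symmetric]) (rule integrable_gauss_acc(2))
  finally show ?thesis .
qed

section \<open>The limit of the acceptance rate\<close>

lemma gauss_energy_incr_deviation:
  fixes l :: real and a :: "nat \<Rightarrow> real"
  assumes d: "d > 0"
  defines "dev z \<equiv> energy_incr d (l / sqrt (real d)) a z - (l / sqrt (real d) * innerd d a z + l\<^sup>2 / 2)"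
  shows "integrable (gauss d) (\<lambda>z. (dev z)\<^sup>2)"
    and "(\<integral>z. (dev z)\<^sup>2 \<partial>gauss d) = l ^ 4 / (2 * real d)"
proof -
  have "dev z = l\<^sup>2 / (2 * real d) * (innerd d z z - real d)" for z
    unfolding dev_def energy_incr_def using d by (simp add: power_divide field_simps)
  then have sq: "(dev z)\<^sup>2 = (l\<^sup>2 / (2 * real d))\<^sup>2 * (innerd d z z - real d)\<^sup>2" for z
    by (simp only: power_mult_distrib)
  show "integrable (gauss d) (\<lambda>z. (dev z)\<^sup>2)"
    unfolding sq using gauss_norm_sq_variance(1) by simp
  have "(\<integral>z. (dev z)\<^sup>2 \<partial>gauss d) = (l\<^sup>2 / (2 * real d))\<^sup>2 * (2 * real d)"
    unfolding sq using gauss_norm_sq_variance(2) by simp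
  also have "\<dots> = l ^ 4 / (2 * real d)"
    using d by (simp add: power2_eq_square power4_eq_xxxx field_simps)
  finally show "(\<integral>z. (dev z)\<^sup>2 \<partial>gauss d) = l ^ 4 / (2 * real d)" .
qed

lemma integral_gauss_acc_slope_approx:
  assumes d: "d > 0" and l: "l > 0" and x: "x > 0" and aa: "innerd d a a = real d * x"
    and \<delta>: "\<delta> > 0"
  shows "\<bar>(\<integral>z. acc_slope (energy_incr d (l / sqrt (real d)) a z) \<partial>gauss d)
      - exp (l\<^sup>2 * (x - 1) / 2) * Phi (l / (2 * sqrt x) - l * sqrt x)\<bar>
     \<le> \<delta> + \<delta> / (l * sqrt x) + l ^ 4 / (2 * real d * \<delta>\<^sup>2)"
proof -
  interpret prob_space "gauss d"
    by (rule prob_space_gauss)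
  define h where "h = l / sqrt (real d)"
  define c where "c = l * sqrt x"
  have c: "c > 0"
    using l x by (simp add: c_def)
  have pos: "innerd d a a > 0"
    using aa d x by simp
  have hc: "h * sqrt (innerd d a a) = c"
    unfolding h_def c_def aa using d by (simp add: real_sqrt_mult)
  define p where "p z = energy_incr d h a z" for z
  define p\<^sub>0 where "p\<^sub>0 z = h * innerd d a z + l\<^sup>2 / 2" for z
  have [measurable]: "p \<in> borel_measurable (gauss d)" "p\<^sub>0 \<in> borel_measurable (gauss d)"
    unfolding p_def p\<^sub>0_def by measurable
  have affine: "(\<integral>z. f (p\<^sub>0 z) \<partial>gauss d) = (\<integral>w. f (c * w + l\<^sup>2 / 2) \<partial>std_normal)"
    if [measurable]: "f \<in> borel_measurable borel" for f :: "real \<Rightarrow> real"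
    using integral_gauss_innerd[OF pos, of "\<lambda>t. f (h * t + l\<^sup>2 / 2)"]
    by (simp add: p\<^sub>0_def hc[symmetric] mult.assoc)
  have "c\<^sup>2 / 2 - l\<^sup>2 / 2 = l\<^sup>2 * (x - 1) / 2" "l\<^sup>2 / 2 / c - c = l / (2 * sqrt x) - l * sqrt x"
    unfolding c_def using x l by (simp_all add: power_mult_distrib power2_eq_square field_simps)
  then have limit: "(\<integral>z. acc_slope (p\<^sub>0 z) \<partial>gauss d)
      = exp (l\<^sup>2 * (x - 1) / 2) * Phi (l / (2 * sqrt x) - l * sqrt x)"
    using integral_std_normal_acc_slope_affine[OF c, of "l\<^sup>2 / 2"] by (simp add: affine)
  have window: "(\<integral>z. indicator {t. \<bar>t\<bar> \<le> \<delta>} (p\<^sub>0 z) \<partial>gauss d) \<le> \<delta> / c"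
    using integral_std_normal_affine_near_0_le[OF c \<delta>] by (simp add: affine)
  have int_sq: "integrable (gauss d) (\<lambda>z. (p z - p\<^sub>0 z)\<^sup>2 / \<delta>\<^sup>2)"
    and variance: "(\<integral>z. (p z - p\<^sub>0 z)\<^sup>2 / \<delta>\<^sup>2 \<partial>gauss d) = l ^ 4 / (2 * real d * \<delta>\<^sup>2)"
    using gauss_energy_incr_deviation[OF d, of l a] by (simp_all add: p_def p\<^sub>0_def h_def)
  have int: "integrable (gauss d) (\<lambda>z. acc_slope (p z))" "integrable (gauss d) (\<lambda>z. acc_slope (p\<^sub>0 z))"
    "integrable (gauss d) (\<lambda>z. indicator {t. \<bar>t\<bar> \<le> \<delta>} (p\<^sub>0 z) :: real)"
    by (rule integrable_const_bound[where B=1]; simp add: acc_slope_bounds)+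
  have "\<bar>(\<integral>z. acc_slope (p z) \<partial>gauss d) - (\<integral>z. acc_slope (p\<^sub>0 z) \<partial>gauss d)\<bar>
      \<le> (\<integral>z. \<bar>acc_slope (p z) - acc_slope (p\<^sub>0 z)\<bar> \<partial>gauss d)"
    using int by (simp flip: Bochner_Integration.integral_diff)
  also have "\<dots> \<le> (\<integral>z. \<delta> + indicator {t. \<bar>t\<bar> \<le> \<delta>} (p\<^sub>0 z) + (p z - p\<^sub>0 z)\<^sup>2 / \<delta>\<^sup>2 \<partial>gauss d)"
    using int int_sq by (intro integral_mono abs_acc_slope_diff_le \<delta>) auto
  also have "\<dots> \<le> \<delta> + \<delta> / c + l ^ 4 / (2 * real d * \<delta>\<^sup>2)"
    using int int_sq window variance by (simp add: prob_space)
  finally show ?thesis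
    unfolding limit[symmetric] p_def h_def c_def .
qed

lemma limfun_approx_integral_acc_slope:
  assumes d: "d > 0" and l: "l > 0" and x: "0 \<le> x" and y: "0 \<le> y" and v: "\<bar>v\<bar> \<le> sqrt (x * y)"
    and aa: "innerd d a a = real d * x" and \<delta>: "\<delta> > 0"
  shows "\<bar>l\<^sup>2 * v * (\<integral>z. acc_slope (energy_incr d (l / sqrt (real d)) a z) \<partial>gauss d) + limfun l x v\<bar>
    \<le> (l\<^sup>2 * \<bar>v\<bar> + l * sqrt y) * \<delta> + l ^ 6 * \<bar>v\<bar> / (2 * \<delta>\<^sup>2) / real d"
proof (cases "x = 0")
  case True
  then show ?thesis
    using v l y \<delta> by (simp add: limfun_def)
next
  case False
  then have x: "x > 0"
    using x by simp
  define S where "S = (\<integral>z. acc_slope (energy_incr d (l / sqrt (real d)) a z) \<partial>gauss d)"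
  define L where "L = exp (l\<^sup>2 * (x - 1) / 2) * Phi (l / (2 * sqrt x) - l * sqrt x)"
  have "l\<^sup>2 * v * S + limfun l x v = l\<^sup>2 * v * (S - L)"
    by (simp add: limfun_def L_def algebra_simps)
  then have "\<bar>l\<^sup>2 * v * S + limfun l x v\<bar> = l\<^sup>2 * \<bar>v\<bar> * \<bar>S - L\<bar>"
    by (simp add: abs_mult)
  also have "\<dots> \<le> l\<^sup>2 * \<bar>v\<bar> * (\<delta> + \<delta> / (l * sqrt x) + l ^ 4 / (2 * real d * \<delta>\<^sup>2))"
    unfolding S_def L_def by (intro mult_left_mono integral_gauss_acc_slope_approx[OF d l x aa \<delta>]) simp
  also have "\<dots> = l\<^sup>2 * \<bar>v\<bar> * \<delta> + l * (\<bar>v\<bar> / sqrt x) * \<delta> + l ^ 6 * \<bar>v\<bar> / (2 * \<delta>\<^sup>2) / real d"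
    using l x d by (simp add: field_simps power2_eq_square power_numeral_reduce)
  also have "\<dots> \<le> l\<^sup>2 * \<bar>v\<bar> * \<delta> + l * sqrt y * \<delta> + l ^ 6 * \<bar>v\<bar> / (2 * \<delta>\<^sup>2) / real d"
  proof -
    have "\<bar>v\<bar> / sqrt x \<le> sqrt y"
      using v x by (simp add: real_sqrt_mult divide_le_eq mult.commute)
    then have "l * (\<bar>v\<bar> / sqrt x) * \<delta> \<le> l * sqrt y * \<delta>"
      using l \<delta> by (intro mult_right_mono mult_left_mono) auto
    then show ?thesis
      by linarith
  qed
  finally show ?thesis
    unfolding S_def by (simp add: algebra_simps)
qed

lemma abs_integral_innerd_acc_slope_le:
  "\<bar>\<integral>z. innerd d b z * acc_slope (energy_incr d h a z) \<partial>gauss d\<bar> \<le> sqrt (innerd d b b)"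
proof -
  have "\<bar>\<integral>z. innerd d b z * acc_slope (energy_incr d h a z) \<partial>gauss d\<bar> \<le> (\<integral>z. \<bar>innerd d b z\<bar> \<partial>gauss d)"
    by (rule order_trans[OF integral_abs_bound integral_mono])
      (use integrable_innerd_gauss[of d b] acc_slope_bounds in
        \<open>auto simp: abs_mult mult_left_le intro: Bochner_Integration.integrable_bound\<close>)
  also have "\<dots> \<le> sqrt (innerd d b b)"
    by (rule integral_abs_innerd_gauss_le)
  finally show ?thesis .
qed

lemma integral_gauss_innerd_acc_prob_approx:
  assumes d: "d > 0" and l: "l > 0" and x: "0 \<le> x" and y: "0 \<le> y" and v: "\<bar>v\<bar> \<le> sqrt (x * y)"
    and aa: "innerd d a a = real d * x" and bb: "innerd d b b = real d * y"
    and ab: "innerd d a b = real d * v" and \<delta>: "\<delta> > 0"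
  shows "\<bar>(\<integral>z. l / sqrt (real d) * innerd d b z * acc_prob (energy_incr d (l / sqrt (real d)) a z) \<partial>gauss d)
      - limfun l x v\<bar>
     \<le> (l\<^sup>2 * \<bar>v\<bar> + l * sqrt y) * \<delta> + (l ^ 6 * \<bar>v\<bar> / (2 * \<delta>\<^sup>2) + l ^ 3 * sqrt y) / real d"
proof -
  define h where "h = l / sqrt (real d)"
  have h: "h > 0"
    using l d by (simp add: h_def)
  define S where "S = (\<integral>z. acc_slope (energy_incr d h a z) \<partial>gauss d)"
  define R where "R = (\<integral>z. innerd d b z * acc_slope (energy_incr d h a z) \<partial>gauss d)"
  have "h * h * innerd d a b = l\<^sup>2 * v"
    using d by (simp add: h_def ab power2_eq_square)
  then have split: "(\<integral>z. h * innerd d b z * acc_prob (energy_incr d h a z) \<partial>gauss d)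
      - limfun l x v = - (l\<^sup>2 * v * S + limfun l x v) - h ^ 3 * R"
    by (simp add: integral_gauss_innerd_acc_prob[OF h] S_def R_def power2_eq_square power3_eq_cube
        algebra_simps)
  have "\<bar>h ^ 3 * R\<bar> \<le> h ^ 3 * sqrt (real d * y)"
    using abs_integral_innerd_acc_slope_le[of d b h a] h by (simp add: R_def bb abs_mult mult_left_mono)
  also have "\<dots> = l ^ 3 * sqrt y / real d"
    using d by (simp add: h_def power_divide real_sqrt_mult power3_eq_cube field_simps)
  finally have "\<bar>h ^ 3 * R\<bar> \<le> l ^ 3 * sqrt y / real d" .
  moreover have "\<bar>l\<^sup>2 * v * S + limfun l x v\<bar> \<le> (l\<^sup>2 * \<bar>v\<bar> + l * sqrt y) * \<delta> + l ^ 6 * \<bar>v\<bar> / (2 * \<delta>\<^sup>2) / real d"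
    unfolding S_def h_def by (rule limfun_approx_integral_acc_slope[OF d l x y v aa \<delta>])
  moreover have "(l ^ 6 * \<bar>v\<bar> / (2 * \<delta>\<^sup>2) + l ^ 3 * sqrt y) / real d
      = l ^ 6 * \<bar>v\<bar> / (2 * \<delta>\<^sup>2) / real d + l ^ 3 * sqrt y / real d"
    by (rule add_divide_distrib)
  ultimately show ?thesis
    unfolding h_def[symmetric] split
    using abs_triangle_ineq4[of "- (l\<^sup>2 * v * S + limfun l x v)" "h ^ 3 * R"]
      abs_minus_cancel[of "l\<^sup>2 * v * S + limfun l x v"] by linarith
qed

section \<open>From the proposal noise to the limit\<close>

lemma prob_space_unif01: "prob_space unif01"
  unfolding unif01_def by (rule prob_space_uniform_measure) auto

lemma sets_unif01 [simp, measurable_cong]: "sets unif01 = sets borel"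
  unfolding unif01_def by simp

lemma integral_unif01_atMost:
  assumes "t > 0"
  shows "(\<integral>u. (if u \<le> t then 1 else 0) \<partial>unif01) = min 1 t"
proof -
  have "(\<integral>u. (if u \<le> t then 1 else 0) \<partial>unif01) = (\<integral>u. indicator {..t} u \<partial>unif01)"
    by (intro Bochner_Integration.integral_cong) (auto simp: indicator_def)
  also have "\<dots> = measure unif01 {..t}"
    by (simp add: unif01_def)
  also have "\<dots> = measure lborel ({0<..<1} \<inter> {..t}) / measure lborel {0<..<1::real}"
    unfolding unif01_def by (rule measure_uniform_measure) auto
  also have "\<dots> = min 1 t"
  proof (cases "t < 1")
    case True
    then have "{0<..<1} \<inter> {..t} = {0<..t}"
      by auto
    then show ?thesis
      using True assms by simp
  next
    case False
    then have "{0<..<1} \<inter> {..t} = {0<..<1::real}"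
      by auto
    then show ?thesis
      using False by simp
  qed
  finally show ?thesis .
qed

lemma integral_unif01_accept:
  "(\<integral>u. accept d h a (z, u) \<partial>unif01) = acc_prob (energy_incr d h a z)"
proof -
  have "exp (- h * innerd d a z - h\<^sup>2 * innerd d z z / 2) = exp (- energy_incr d h a z)"
    by (simp add: energy_incr_def)
  then show ?thesis
    by (simp add: accept_def integral_unif01_atMost acc_prob_def)
qed

lemma borel_measurable_accept [measurable]:
  "(\<lambda>zu. accept d h a zu) \<in> borel_measurable (noise d)"
  unfolding accept_def noise_def by measurable

lemma borel_measurable_accept_term [measurable]:
  "(\<lambda>zu. h * innerd d b (fst zu) * accept d h a zu) \<in> borel_measurable (noise d)"
proof -
  have "(\<lambda>zu. innerd d b (fst zu)) \<in> borel_measurable (noise d)"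
    unfolding noise_def by measurable
  then show ?thesis
    by measurable
qed

lemma integral_noise_accept:
  "(\<integral>zu. h * innerd d b (fst zu) * accept d h a zu \<partial>noise d)
     = (\<integral>z. h * innerd d b z * acc_prob (energy_incr d h a z) \<partial>gauss d)"
proof -
  interpret G: prob_space "gauss d"
    by (rule prob_space_gauss)
  interpret U: prob_space unif01
    by (rule prob_space_unif01)
  interpret pair_sigma_finite "gauss d" unif01 ..
  let ?f = "\<lambda>zu. h * innerd d b (fst zu) * accept d h a zu"
  have accept_abs: "\<bar>accept d h a zu\<bar> = accept d h a zu" for zu
    by (simp add: accept_def)
  have inner: "(\<integral>u. ?f (z, u) \<partial>unif01) = h * innerd d b z * acc_prob (energy_incr d h a z)"
    "(\<integral>u. norm (?f (z, u)) \<partial>unif01) = \<bar>h * innerd d b z\<bar> * acc_prob (energy_incr d h a z)" for z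
    by (simp_all add: integral_unif01_accept abs_mult accept_abs)
  have [measurable]: "?f \<in> borel_measurable (gauss d \<Otimes>\<^sub>M unif01)"
    unfolding noise_def[symmetric] by (rule borel_measurable_accept_term)
  have "integrable (gauss d \<Otimes>\<^sub>M unif01) ?f"
  proof (rule Fubini_integrable)
    have "integrable (gauss d) (\<lambda>z. \<bar>h * innerd d b z\<bar>)"
      using integrable_innerd_gauss by auto
    then show "integrable (gauss d) (\<lambda>z. \<integral>u. norm (?f (z, u)) \<partial>unif01)"
      unfolding inner(2)
      by (rule Bochner_Integration.integrable_bound)
        (measurable, use acc_prob_bounds in \<open>auto simp: mult_left_le intro!: AE_I2\<close>)
    show "AE z in gauss d. integrable unif01 (\<lambda>u. ?f (z, u))"
    proof (rule AE_I2)
      fix z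
      show "integrable unif01 (\<lambda>u. ?f (z, u))"
        by (rule U.integrable_const_bound[where B="\<bar>h * innerd d b z\<bar>"])
          (auto simp: accept_def abs_mult, measurable)
    qed
  qed measurable
  then have "integral\<^sup>L (gauss d \<Otimes>\<^sub>M unif01) ?f = (\<integral>z. (\<integral>u. ?f (z, u) \<partial>unif01) \<partial>gauss d)"
    by (rule integral_fst'[symmetric])
  then show ?thesis
    by (simp only: inner(1) noise_def)
qed

lemma coupling_integral_marginals:
  fixes f :: "(nat \<Rightarrow> real) \<times> real \<Rightarrow> real"
  assumes K: "coupling d K" and f: "f \<in> borel_measurable (noise d)"
  shows "(\<integral>w. f (fst w) \<partial>K) = integral\<^sup>L (noise d) f"
    and "(\<integral>w. f (snd w) \<partial>K) = integral\<^sup>L (noise d) f"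
proof -
  have sets: "sets K = sets (noise d \<Otimes>\<^sub>M noise d)"
    using K by (simp add: coupling_def)
  have "fst \<in> measurable K (noise d)" "snd \<in> measurable K (noise d)"
    unfolding measurable_cong_sets[OF sets refl] by simp_all
  from integral_distr[OF this(1) f] integral_distr[OF this(2) f] K
  show "(\<integral>w. f (fst w) \<partial>K) = integral\<^sup>L (noise d) f" "(\<integral>w. f (snd w) \<partial>K) = integral\<^sup>L (noise d) f"
    by (simp_all add: coupling_def)
qed

lemma eventually_small_of_uniform_bound:
  fixes f :: "nat \<Rightarrow> 'a \<Rightarrow> real"
  assumes A: "A \<ge> 0" and \<epsilon>: "\<epsilon> > 0"
    and bound: "\<And>\<delta> d p. \<delta> > 0 \<Longrightarrow> d > 0 \<Longrightarrow> P d p \<Longrightarrow> \<bar>f d p\<bar> \<le> A * \<delta> + C \<delta> / real d"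
  shows "eventually (\<lambda>d. \<forall>p. P d p \<longrightarrow> \<bar>f d p\<bar> < \<epsilon>) sequentially"
proof -
  define \<delta> where "\<delta> = \<epsilon> / (2 * (A + 1))"
  have \<delta>: "\<delta> > 0" "A * \<delta> < \<epsilon> / 2"
    using A \<epsilon> by (auto simp: \<delta>_def field_simps)
  have "\<bar>f d p\<bar> < \<epsilon>" if "nat \<lceil>2 * C \<delta> / \<epsilon>\<rceil> + 1 \<le> d" "P d p" for d p
  proof -
    have d: "d > 0"
      using that by simp
    have "2 * C \<delta> / \<epsilon> < real d"
      using that(1) by linarith
    then have "C \<delta> / real d < \<epsilon> / 2"
      using \<epsilon> d by (simp add: field_simps)
    then show ?thesis
      using bound[OF \<delta>(1) d that(2)] \<delta>(2) by linarith
  qed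
  then show ?thesis
    unfolding eventually_sequentially by blast
qed

lemma accept_term_tendsto_uniformly:
  assumes l: "l > 0" and X: "X \<ge> 0" and Y: "Y \<ge> 0" and \<epsilon>: "\<epsilon> > 0"
  shows "eventually (\<lambda>d. \<forall>x y v a b.
    (x, y, v) \<in> Sset X Y \<and> innerd d a a = real d * x \<and> innerd d b b = real d * y
      \<and> innerd d a b = real d * v \<longrightarrow>
    \<bar>(\<integral>zu. l / sqrt (real d) * innerd d b (fst zu) * accept d (l / sqrt (real d)) a zu \<partial>noise d)
      - limfun l x v\<bar> < \<epsilon>) sequentially"
proof -
  let ?P = "\<lambda>d (x, y, v, a, b). (x, y, v) \<in> Sset X Y \<and> innerd d a a = real d * x
    \<and> innerd d b b = real d * y \<and> innerd d a b = real d * v"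
  let ?f = "\<lambda>d (x, y, v, a, b).
    (\<integral>zu. l / sqrt (real d) * innerd d b (fst zu) * accept d (l / sqrt (real d)) a zu \<partial>noise d)
      - limfun l x v"
  have "eventually (\<lambda>d. \<forall>p. ?P d p \<longrightarrow> \<bar>?f d p\<bar> < \<epsilon>) sequentially"
  proof (rule eventually_small_of_uniform_bound[OF _ \<epsilon>,
        where A="l\<^sup>2 * sqrt (X * Y) + l * sqrt Y"
        and C="\<lambda>\<delta>. l ^ 6 * sqrt (X * Y) / (2 * \<delta>\<^sup>2) + l ^ 3 * sqrt Y"])
    show "l\<^sup>2 * sqrt (X * Y) + l * sqrt Y \<ge> 0"
      using l X Y by simp
    fix \<delta> :: real and d :: nat and p
    assume \<delta>: "\<delta> > 0" and d: "d > 0" and "?P d p"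
    then obtain x y v a b where p: "p = (x, y, v, a, b)" and x: "0 \<le> x" "x \<le> X"
      and y: "0 \<le> y" "y \<le> Y" and v: "\<bar>v\<bar> \<le> sqrt (x * y)" and inner: "innerd d a a = real d * x"
      "innerd d b b = real d * y" "innerd d a b = real d * v"
      by (cases p) (auto simp: Sset_def)
    have "\<bar>v\<bar> \<le> sqrt (X * Y)"
      using v x y by (meson mult_mono order_trans real_sqrt_le_mono)
    moreover have "sqrt y \<le> sqrt Y"
      using y by simp
    ultimately have "(l\<^sup>2 * \<bar>v\<bar> + l * sqrt y) * \<delta> + (l ^ 6 * \<bar>v\<bar> / (2 * \<delta>\<^sup>2) + l ^ 3 * sqrt y) / real d
        \<le> (l\<^sup>2 * sqrt (X * Y) + l * sqrt Y) * \<delta> + (l ^ 6 * sqrt (X * Y) / (2 * \<delta>\<^sup>2) + l ^ 3 * sqrt Y) / real d"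
      using l \<delta> d by (intro add_mono mult_right_mono divide_right_mono mult_left_mono) auto
    moreover have "?f d p = (\<integral>z. l / sqrt (real d) * innerd d b z
        * acc_prob (energy_incr d (l / sqrt (real d)) a z) \<partial>gauss d) - limfun l x v"
      by (simp only: p prod.case integral_noise_accept)
    ultimately show "\<bar>?f d p\<bar> \<le> (l\<^sup>2 * sqrt (X * Y) + l * sqrt Y) * \<delta>
        + (l ^ 6 * sqrt (X * Y) / (2 * \<delta>\<^sup>2) + l ^ 3 * sqrt Y) / real d"
      using integral_gauss_innerd_acc_prob_approx[OF d l x(1) y(1) v inner \<delta>] by linarith
  qed
  then show ?thesis
    by eventually_elim auto
qed

theorem lemma1:
  fixes l X Y :: real
  assumes "l > 0" and "X > 0" and "Y > 0"
  shows "\<forall>\<epsilon>>0. \<exists>D::nat. \<forall>d\<ge>D. \<forall>x y v a b K.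
     (x, y, v) \<in> Sset X Y \<and>
     innerd d a a = real d * x \<and> innerd d b b = real d * y \<and> innerd d a b = real d * v \<and>
     coupling d K \<longrightarrow>
       \<bar>(\<integral>w. (l / sqrt (real d)) * innerd d b (fst (fst w)) * accept d (l / sqrt (real d)) a (fst w) \<partial>K)
          - limfun l x v\<bar> < \<epsilon> \<and>
       \<bar>(\<integral>w. (l / sqrt (real d)) * innerd d a (fst (snd w)) * accept d (l / sqrt (real d)) b (snd w) \<partial>K)
          - limfun l y v\<bar> < \<epsilon>"
proof (intro allI impI, unfold eventually_sequentially[symmetric], goal_cases)
  case (1 \<epsilon>)
  have Sset_swap: "(x, y, v) \<in> Sset X Y \<longleftrightarrow> (y, x, v) \<in> Sset Y X" for x y v
    by (auto simp: Sset_def mult.commute)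
  note marginals = coupling_integral_marginals[OF _ borel_measurable_accept_term]
  from accept_term_tendsto_uniformly[OF assms(1) less_imp_le[OF assms(2)] less_imp_le[OF assms(3)] 1]
    accept_term_tendsto_uniformly[OF assms(1) less_imp_le[OF assms(3)] less_imp_le[OF assms(2)] 1]
  show ?case
  proof eventually_elim
    case (elim d)
    show ?case
    proof (intro allI impI, goal_cases)
      case (1 x y v a b K)
      then have K: "coupling d K"
        by simp
      show ?case
        unfolding marginals[OF K]
        using 1 elim(1)[rule_format, of x y v a b] elim(2)[rule_format, of y x v b a]
        by (auto simp: Sset_swap innerd_comm[of d b a])
    qed
  qed
qed

end
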